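(* Under the standing setup below, let $\theta$ be a function on (an open subset of) $M$ with $e_2(\theta)=e_3(\theta)=0$ and $e_1(\theta)=-\lambda_2$ (such a function exists locally), and set $$V=\frac{-(b_1+i\lambda_2)E_0+E_1}{\sqrt{1+b_1^2+\lambda_2^2}}.$$ Then $D_{E_2}V=D_{E_3}V=0$ and $D_{E_1}V=3\lambda_2\, iV$. Consequently $V$ takes values in the unit circle of a fixed complex line $\mathbb{C}\,v\subset\mathbb{C}^4$, and writing $V=e^{it}v$ one has $e_1(t)=3\lambda_2$, $e_2(t)=e_3(t)=0$; in particular, after adding a constant to $\theta$, $\theta=-t/3$.
   Context: Standing setup: $\mathbb{C}P^3(4)$ carries the Fubini–Study metric of constant holomorphic sectional curvature $4$, complex structure $J$, and $\pi:S^7(1)\subset\mathbb{C}^4\to\mathbb{C}P^3(4)$ is the Hopf projection. $M$ is a connected $3$-dimensional non-minimal Lagrangian submanifold of $\mathbb{C}P^3(4)$ attaining equality at every point in $\delta_M\le 2+\tfrac32\|H\|^2$ (here $\delta_M=\tau-\inf K$, $\tau$ the scalar curvature, $H=\frac13\operatorname{trace}h$). Let $h$ be the second fundamental form and $C(X,Y,Z)=\langle h(X,Y),JZ\rangle$. Locally there is an orthonormal frame $e_1,e_2,e_3$ with $C(e_2,e_2,e_2)=-C(e_3,e_3,e_2)=:a$, $C(e_1,e_1,e_1)=4\lambda_2$, $C(e_2,e_2,e_1)=C(e_3,e_3,e_1)=\lambda_2$ with $\lambda_2\neq0$, and all other components zero up to symmetry. $E_0:M\to S^7(1)\subset\mathbb{C}^4$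 is a horizontal lift of $M$ (i.e. $\pi\circ E_0$ is the inclusion and $dE_0(X)$ is orthogonal to $E_0$ and $iE_0$), $E_j=dE_0(e_j)$, and $D$ is the flat connection of $\mathbb{C}^4=\mathbb{R}^8$; $D_{E_j}$ denotes differentiation along $e_j$. There is a smooth function $b_1$ such that $D_{E_1}E_1=4\lambda_2 iE_1-E_0$ and $D_{E_j}E_1=(b_1+i\lambda_2)E_j$ for $j=2,3$; moreover $e_2(\lambda_2)=e_3(\lambda_2)=e_2(b_1)=e_3(b_1)=0$, $e_1(\lambda_2)=2\lambda_2b_1$ and $e_1(b_1)=-(1+b_1^2+3\lambda_2^2)$. *)

theory Defs
  imports "HOL-Analysis.Analysis"
begin

text \<open>Local model: an open connected set U in real^3 plays the role of a chart of M.\<close>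

definition vderiv :: "('a::real_normed_vector \<Rightarrow> 'a) \<Rightarrow> ('a \<Rightarrow> 'b::real_normed_vector) \<Rightarrow> 'a \<Rightarrow> 'b"
  where "vderiv X f p = frechet_derivative f (at p) (X p)"

end

theory Submission
  imports Defs "HOL-Library.Real_Mod"
begin

(* For j = 2, 3 the functions b1, lam2 are constant along e_j and D_{e_j} E1 = (b1 + i lam2) E_j,
   so V does not move; along e1 the structure equations give
   b1 e1(b1) + lam2 e1(lam2) = -b1 (1 + b1^2 + lam2^2), which yields D_{e1} V = 3 i lam2 V.
   As e1(theta) = -lam2, the field cis(3 theta) V has vanishing derivative along the frame, and
   the frame spans every tangent space because dE0 maps it to an orthonormal triple; hence
   cis(3 theta) V is a constant v on the connected set U, a unit vector because V is. Any
   continuous phase t with V = cis(t) v has t + 3 theta continuous with values in 2 pi Z,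
   hence constant. *)

lemma norm_vector_smult: "norm (c *s x) = norm (c::'a::real_normed_field) * norm (x::'a^'n)"
  unfolding norm_vec_def L2_set_def
  by (simp add: norm_mult power_mult_distrib sum_distrib_left[symmetric] real_sqrt_mult)

lemma bounded_bilinear_vector_smult:
  "bounded_bilinear (\<lambda>(c::'a::real_normed_field) (x::'a^'n). c *s x)"
  by (rule bounded_bilinear.intro)
     (auto simp: vec_eq_iff algebra_simps norm_vector_smult intro: exI[of _ 1])

lemmas has_derivative_vector_smult[derivative_intros] =
  bounded_bilinear.FDERIV[OF bounded_bilinear_vector_smult]

lemma differentiable_vector_smult [derivative_intros]:
  fixes c :: "'a::real_normed_vector \<Rightarrow> 'b::real_normed_field" and x :: "'a \<Rightarrow> 'b^'n"
  assumes "c differentiable at p within S" "x differentiable at p within S"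
  shows "(\<lambda>q. c q *s x q) differentiable at p within S"
  using assms unfolding differentiable_def by (blast intro: has_derivative_vector_smult)

lemma differentiable_cis [derivative_intros]:
  "f differentiable at p within S \<Longrightarrow> (\<lambda>x. cis (f x)) differentiable at p within S"
  unfolding differentiable_def by (blast intro: has_derivative_cis)

lemma vector_smult_complex_decompose:
  "c *s x = Re c *\<^sub>R x + Im c *\<^sub>R (\<i> *s x)" for x :: "complex^'n"
  by (simp add: vec_eq_iff complex_eq_iff)

lemma norm_diff_vector_smult_orthogonal_sq:
  fixes x y :: "complex^'n"
  assumes "y \<bullet> x = 0" "y \<bullet> (\<i> *s x) = 0"
  shows "(norm (y - c *s x))\<^sup>2 = (norm y)\<^sup>2 + (cmod c)\<^sup>2 * (norm x)\<^sup>2"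
proof -
  have "y \<bullet> (c *s x) = 0"
    unfolding vector_smult_complex_decompose[of c] using assms by (simp add: inner_add_right)
  then have "(norm (y + (- c) *s x))\<^sup>2 = (norm y)\<^sup>2 + (norm ((- c) *s x))\<^sup>2"
    by (intro norm_add_Pythagorean) (simp add: orthogonal_def inner_minus_right)
  then show ?thesis
    by (simp add: norm_vector_smult power_mult_distrib vector_sneg_minus1[symmetric])
qed

lemma vderiv_has_derivative: "(f has_derivative f') (at p) \<Longrightarrow> vderiv X f p = f' (X p)"
  unfolding vderiv_def by (simp add: frechet_derivative_at[symmetric])

lemma vderiv_cong_open:
  assumes "open U" "p \<in> U" "\<And>x. x \<in> U \<Longrightarrow> f x = g x"
  shows "vderiv X f p = vderiv X g p"
proof -
  have "(f has_derivative D) (at p) \<longleftrightarrow> (g has_derivative D) (at p)" for D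
    using has_derivative_transform_within_open assms by (metis (no_types, lifting))
  then show ?thesis unfolding vderiv_def frechet_derivative_def by simp
qed

lemma vderiv_mult_left:
  fixes f :: "'a::real_normed_vector \<Rightarrow> 'b::real_normed_algebra"
  assumes "f differentiable at p"
  shows "vderiv X (\<lambda>x. c * f x) p = c * vderiv X f p"
  using vderiv_has_derivative[OF has_derivative_mult_right[OF assms[unfolded frechet_derivative_works]]]
  by (simp add: vderiv_def)

lemma vderiv_cis_vector_smult:
  fixes x :: "'a::real_normed_vector \<Rightarrow> complex^'n"
  assumes "\<theta> differentiable at p" "x differentiable at p"
  shows "vderiv X (\<lambda>q. cis (\<theta> q) *s x q) p
       = cis (\<theta> p) *s (vderiv X x p + (\<i> * of_real (vderiv X \<theta> p)) *s x p)"
proof -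
  have "((\<lambda>q. cis (\<theta> q) *s x q) has_derivative
     (\<lambda>h. cis (\<theta> p) *s frechet_derivative x (at p) h
         + (\<i> * of_real (frechet_derivative \<theta> (at p) h) * cis (\<theta> p)) *s x p)) (at p)"
    by (auto intro!: derivative_eq_intros assms[unfolded frechet_derivative_works]
             simp: algebra_simps scaleR_conv_of_real)
  from vderiv_has_derivative[OF this] show ?thesis
    by (simp add: vderiv_def vec_eq_iff algebra_simps)
qed

definition v_field ::
    "('a \<Rightarrow> real) \<Rightarrow> ('a \<Rightarrow> real) \<Rightarrow> ('a \<Rightarrow> complex^'n) \<Rightarrow> ('a \<Rightarrow> complex^'n) \<Rightarrow> 'a \<Rightarrow> complex^'n"
  where "v_field b l E0 E1 p =
           (1 / sqrt (1 + (b p)\<^sup>2 + (l p)\<^sup>2)) *\<^sub>R (E1 p - Complex (b p) (l p) *s E0 p)"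

lemma has_derivative_v_field:
  fixes E0 E1 :: "'a::real_normed_vector \<Rightarrow> complex^'n"
  assumes "(b has_derivative Db) (at p)" "(l has_derivative Dl) (at p)"
    and "(E0 has_derivative D0) (at p)" "(E1 has_derivative D1) (at p)"
  defines "q \<equiv> 1 + (b p)\<^sup>2 + (l p)\<^sup>2"
  shows "(v_field b l E0 E1 has_derivative
           (\<lambda>h. (1 / sqrt q) *\<^sub>R (D1 h - Complex (b p) (l p) *s D0 h - Complex (Db h) (Dl h) *s E0 p)
                - ((b p * Db h + l p * Dl h) / q) *\<^sub>R v_field b l E0 E1 p)) (at p)"
proof -
  define r where "r x = 1 / sqrt (1 + (b x)\<^sup>2 + (l x)\<^sup>2)" for x
  have "q > 0"
    unfolding q_def by (simp add: add_pos_nonneg)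
  then have r: "(r has_derivative (\<lambda>h. - ((b p * Db h + l p * Dl h) / q) * r p)) (at p)"
    unfolding r_def q_def
    by (auto intro!: derivative_eq_intros assms simp: fun_eq_iff divide_simps power2_eq_square)
  have c: "((\<lambda>x. Complex (b x) (l x)) has_derivative (\<lambda>h. Complex (Db h) (Dl h))) (at p)"
    unfolding Complex_eq by (auto intro!: derivative_eq_intros assms)
  have v_eq: "v_field b l E0 E1 = (\<lambda>x. r x *\<^sub>R (E1 x - Complex (b x) (l x) *s E0 x))"
    by (simp add: v_field_def r_def fun_eq_iff)
  have "((\<lambda>x. r x *\<^sub>R (E1 x - Complex (b x) (l x) *s E0 x)) has_derivative
          (\<lambda>h. r p *\<^sub>R (D1 h - (Complex (b p) (l p) *s D0 h + Complex (Db h) (Dl h) *s E0 p))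
              + (- ((b p * Db h + l p * Dl h) / q) * r p) *\<^sub>R (E1 p - Complex (b p) (l p) *s E0 p)))
        (at p)"
    by (intro derivative_intros r c assms)
  then show ?thesis
    unfolding v_eq by (rule has_derivative_eq_rhs) (simp add: fun_eq_iff r_def q_def algebra_simps)
qed

lemma vderiv_v_field:
  fixes E0 E1 :: "'a::real_normed_vector \<Rightarrow> complex^'n"
  assumes "b differentiable at p" "l differentiable at p"
    and "E0 differentiable at p" "E1 differentiable at p"
  defines "q \<equiv> 1 + (b p)\<^sup>2 + (l p)\<^sup>2"
  shows "vderiv X (v_field b l E0 E1) p =
           (1 / sqrt q) *\<^sub>R (vderiv X E1 p - Complex (b p) (l p) *s vderiv X E0 p
                              - Complex (vderiv X b p) (vderiv X l p) *s E0 p)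
           - ((b p * vderiv X b p + l p * vderiv X l p) / q) *\<^sub>R v_field b l E0 E1 p"
  using vderiv_has_derivative[OF has_derivative_v_field[OF assms(1-4)[unfolded frechet_derivative_works]]]
  by (simp add: vderiv_def q_def)

lemma vderiv_v_field_transverse:
  fixes E0 E1 :: "'a::real_normed_vector \<Rightarrow> complex^'n"
  assumes "b differentiable at p" "l differentiable at p"
    and "E0 differentiable at p" "E1 differentiable at p"
    and "vderiv X b p = 0" "vderiv X l p = 0"
    and "vderiv X E1 p = Complex (b p) (l p) *s vderiv X E0 p"
  shows "vderiv X (v_field b l E0 E1) p = 0"
  using assms by (simp add: vderiv_v_field Complex_eq)

lemma vderiv_v_field_e1:
  fixes E0 E1 :: "'a::real_normed_vector \<Rightarrow> complex^'n"
  assumes "b differentiable at p" "l differentiable at p"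
    and "E0 differentiable at p" "E1 differentiable at p"
    and "vderiv X b p = - (1 + (b p)\<^sup>2 + 3 * (l p)\<^sup>2)" "vderiv X l p = 2 * l p * b p"
    and "vderiv X E0 p = E1 p" "vderiv X E1 p = (\<i> * of_real (4 * l p)) *s E1 p - E0 p"
  shows "vderiv X (v_field b l E0 E1) p = (\<i> * of_real (3 * l p)) *s v_field b l E0 E1 p"
proof -
  define q where "q = 1 + (b p)\<^sup>2 + (l p)\<^sup>2"
  define w where "w = E1 p - Complex (b p) (l p) *s E0 p"
  define A where "A = (\<i> * of_real (4 * l p)) *s E1 p - E0 p - Complex (b p) (l p) *s E1 p
      - Complex (- (1 + (b p)\<^sup>2 + 3 * (l p)\<^sup>2)) (2 * l p * b p) *s E0 p"
  have V: "v_field b l E0 E1 p = (1 / sqrt q) *\<^sub>R w"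
    by (simp add: v_field_def q_def w_def)
  have "q > 0"
    unfolding q_def by (simp add: add_pos_nonneg)
  moreover have "b p * vderiv X b p + l p * vderiv X l p = - b p * q"
    unfolding assms(5,6) q_def by (simp add: algebra_simps power2_eq_square)
  ultimately have "vderiv X (v_field b l E0 E1) p = (1 / sqrt q) *\<^sub>R A + b p *\<^sub>R v_field b l E0 E1 p"
    using assms by (simp add: vderiv_v_field A_def flip: q_def)
  also have "\<dots> = (1 / sqrt q) *\<^sub>R (A + b p *\<^sub>R w)"
    by (simp add: V algebra_simps)
  also have "A + b p *\<^sub>R w = (\<i> * of_real (3 * l p)) *s w"
    by (simp add: A_def w_def vec_eq_iff complex_eq_iff algebra_simps power2_eq_square)
  finally show ?thesis
    by (simp add: V vec_eq_iff)
qed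

lemma differentiable_v_field:
  fixes E0 E1 :: "'a::real_normed_vector \<Rightarrow> complex^'n"
  assumes "b differentiable at p" "l differentiable at p"
    and "E0 differentiable at p" "E1 differentiable at p"
  shows "v_field b l E0 E1 differentiable at p"
  using has_derivative_v_field[OF assms[unfolded frechet_derivative_works]]
  by (rule differentiableI)

lemma norm_v_field:
  assumes "norm (E0 p) = 1" "norm (E1 p) = 1" "E1 p \<bullet> E0 p = 0" "E1 p \<bullet> (\<i> *s E0 p) = 0"
  shows "norm (v_field b l E0 E1 p) = 1"
proof -
  have "(norm (E1 p - Complex (b p) (l p) *s E0 p))\<^sup>2 = 1 + (b p)\<^sup>2 + (l p)\<^sup>2"
    using assms by (simp add: norm_diff_vector_smult_orthogonal_sq complex_norm)
  then have "norm (E1 p - Complex (b p) (l p) *s E0 p) = sqrt (1 + (b p)\<^sup>2 + (l p)\<^sup>2)"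
    by (metis norm_ge_zero real_sqrt_unique)
  moreover have "1 + (b p)\<^sup>2 + (l p)\<^sup>2 > 0"
    by (simp add: add_pos_nonneg)
  ultimately show ?thesis
    by (simp add: v_field_def)
qed

lemma span_eq_UNIV_if_orthonormal_image:
  fixes f :: "'a::euclidean_space \<Rightarrow> 'b::real_inner"
  assumes "linear f" "pairwise orthogonal (f ` B)" "\<forall>x\<in>B. norm (f x) = 1"
    and "card (f ` B) = DIM('a)"
  shows "span B = UNIV"
proof -
  have "independent (f ` B)"
    using assms(2,3) by (intro pairwise_orthogonal_independent) auto
  then have "DIM('a) = dim (f ` B)"
    by (simp add: dim_eq_card_independent assms(4))
  also have "\<dots> \<le> dim B"
    by (rule dim_image_le[OF assms(1)])
  finally show ?thesis
    by (metis dim_eq_full dim_subset_UNIV le_antisym)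
qed

lemma span_eq_UNIV_if_orthonormal_vderiv:
  fixes E :: "'a::euclidean_space \<Rightarrow> 'b::real_inner"
  assumes "DIM('a) = 3" "E differentiable at p"
    and "vderiv e1 E p \<bullet> vderiv e1 E p = 1" "vderiv e2 E p \<bullet> vderiv e2 E p = 1"
      "vderiv e3 E p \<bullet> vderiv e3 E p = 1"
    and "vderiv e1 E p \<bullet> vderiv e2 E p = 0" "vderiv e1 E p \<bullet> vderiv e3 E p = 0"
      "vderiv e2 E p \<bullet> vderiv e3 E p = 0"
  shows "span {e1 p, e2 p, e3 p} = UNIV"
proof (rule span_eq_UNIV_if_orthonormal_image)
  let ?f = "frechet_derivative E (at p)"
  have f: "?f (e1 p) = vderiv e1 E p" "?f (e2 p) = vderiv e2 E p" "?f (e3 p) = vderiv e3 E p"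
    by (simp_all add: vderiv_def)
  show "linear ?f"
    using assms(2) frechet_derivative_works has_derivative_linear by blast
  show "pairwise orthogonal (?f ` {e1 p, e2 p, e3 p})"
    using assms(3-) by (auto simp: f pairwise_insert orthogonal_def inner_commute)
  show "\<forall>x\<in>{e1 p, e2 p, e3 p}. norm (?f x) = 1"
    using assms(3-5) by (simp add: f norm_eq_sqrt_inner)
  have "vderiv e1 E p \<noteq> vderiv e2 E p" "vderiv e1 E p \<noteq> vderiv e3 E p"
    "vderiv e2 E p \<noteq> vderiv e3 E p"
    using assms(3-) by auto
  then show "card (?f ` {e1 p, e2 p, e3 p}) = DIM('a)"
    by (simp add: f assms(1))
qed

lemma constant_on_if_vderiv_zero:
  fixes f :: "'a::euclidean_space \<Rightarrow> 'b::banach"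
  assumes "open U" "connected U" "f differentiable_on U"
    and "\<And>p. p \<in> U \<Longrightarrow> span ((\<lambda>X. X p) ` F) = UNIV"
    and "\<And>p X. p \<in> U \<Longrightarrow> X \<in> F \<Longrightarrow> vderiv X f p = 0"
  shows "f constant_on U"
proof (rule has_derivative_zero_connected_constant_on[OF assms(2,1) finite.emptyI])
  show "continuous_on U f"
    using assms(3) by (rule differentiable_imp_continuous_on)
  show "\<forall>p\<in>U - {}. (f has_derivative (\<lambda>h. 0)) (at p within U)"
  proof
    fix p assume "p \<in> U - {}"
    then have p: "p \<in> U" by simp
    let ?f' = "frechet_derivative f (at p)"
    have f': "(f has_derivative ?f') (at p)"
      using assms(1,3) p by (simp add: differentiable_on_eq_differentiable_at frechet_derivative_works)
    have "?f' h = 0" for h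
    proof (rule linear_eq_0_on_span[OF has_derivative_linear[OF f']])
      show "h \<in> span ((\<lambda>X. X p) ` F)"
        using assms(4)[OF p] by simp
      show "\<And>x. x \<in> (\<lambda>X. X p) ` F \<Longrightarrow> ?f' x = 0"
        using assms(5)[OF p] by (auto simp: vderiv_def)
    qed
    then have "?f' = (\<lambda>h. 0)"
      by auto
    with f' show "(f has_derivative (\<lambda>h. 0)) (at p within U)"
      by (metis has_derivative_at_withinI)
  qed
qed

lemma cis_eq_imp_diff_constant:
  assumes "connected U" "continuous_on U s" "continuous_on U t"
    and "\<And>p. p \<in> U \<Longrightarrow> cis (s p) = cis (t p)"
  obtains k where "\<And>p. p \<in> U \<Longrightarrow> s p = t p + k"
proof -
  define n where "n p = (s p - t p) / (2 * pi)" for p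
  have n_int: "n p \<in> \<int>" if "p \<in> U" for p
  proof -
    have "cis (s p - t p) = 1"
      using assms(4)[OF that] by (simp flip: cis_divide)
    then show ?thesis
      by (auto simp: n_def cis_eq_1_iff)
  qed
  have "n constant_on U"
  proof (rule continuous_discrete_range_constant[OF assms(1)])
    show "continuous_on U n"
      unfolding n_def by (intro continuous_intros assms(2,3)) simp
    show "\<exists>e>0. \<forall>y. y \<in> U \<and> n y \<noteq> n x \<longrightarrow> e \<le> norm (n y - n x)" if "x \<in> U" for x
      using n_int that by (intro exI[of _ 1]) (auto intro!: Ints_nonzero_abs_ge1)
  qed
  then obtain c where "\<And>p. p \<in> U \<Longrightarrow> n p = c"
    by (auto simp: constant_on_def)
  then show ?thesis
    by (intro that[of "2 * pi * c"]) (auto simp: n_def field_simps)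
qed

lemma vderiv_eq_if_cis_eq:
  assumes "open U" "connected U" "s differentiable_on U" "t differentiable_on U"
    and "\<And>p. p \<in> U \<Longrightarrow> cis (s p) = cis (t p)" "p \<in> U"
  shows "vderiv X s p = vderiv X t p"
proof -
  obtain k where k: "\<And>p. p \<in> U \<Longrightarrow> s p = t p + k"
    using cis_eq_imp_diff_constant assms(2,5) assms(3,4)[THEN differentiable_imp_continuous_on]
    by metis
  have "(t has_derivative frechet_derivative t (at p)) (at p)"
    using assms(1,4,6) by (simp add: differentiable_on_eq_differentiable_at frechet_derivative_works)
  then have "((\<lambda>x. t x + k) has_derivative frechet_derivative t (at p)) (at p)"
    by (auto intro!: derivative_eq_intros)
  from vderiv_has_derivative[OF this] have "vderiv X (\<lambda>x. t x + k) p = vderiv X t p"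
    by (simp add: vderiv_def)
  then show ?thesis
    using vderiv_cong_open[OF assms(1,6) k] by simp
qed

lemma constant_on_cis_vector_smult:
  fixes V :: "'a::euclidean_space \<Rightarrow> complex^'n"
  assumes "open U" "connected U" "\<theta> differentiable_on U" "V differentiable_on U"
    and "\<And>p. p \<in> U \<Longrightarrow> span ((\<lambda>X. X p) ` F) = UNIV"
    and "\<And>p X. p \<in> U \<Longrightarrow> X \<in> F \<Longrightarrow> vderiv X V p = - (\<i> * of_real (vderiv X \<theta> p)) *s V p"
  shows "(\<lambda>p. cis (\<theta> p) *s V p) constant_on U"
proof (rule constant_on_if_vderiv_zero[OF assms(1,2) _ assms(5)])
  note diff = assms(3,4)[unfolded differentiable_on_eq_differentiable_at[OF assms(1)]]
  show "(\<lambda>p. cis (\<theta> p) *s V p) differentiable_on U"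
    using diff by (simp add: differentiable_on_eq_differentiable_at[OF assms(1)] derivative_intros)
  show "vderiv X (\<lambda>p. cis (\<theta> p) *s V p) p = 0" if "p \<in> U" "X \<in> F" for p X
    using that diff by (simp add: vderiv_cis_vector_smult assms(6))
qed

lemma exists_unit_vector_if_cis_vector_smult_constant:
  fixes V :: "'a \<Rightarrow> complex^'n"
  assumes "(\<lambda>p. cis (s p) *s V p) constant_on U" "\<And>p. p \<in> U \<Longrightarrow> norm (V p) = 1"
  shows "\<exists>v. norm v = 1 \<and> (\<forall>p\<in>U. V p = cis (- s p) *s v)"
proof (cases "U = {}")
  case True
  obtain v :: "complex^'n" where "norm v = 1"
    using vector_choose_size[of 1] by auto
  with True show ?thesis by blast
next
  case False
  then obtain p0 where "p0 \<in> U" by blast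
  obtain v where v: "\<And>p. p \<in> U \<Longrightarrow> cis (s p) *s V p = v"
    using assms(1) by (auto simp: constant_on_def)
  have "norm v = 1"
    using v[OF \<open>p0 \<in> U\<close>] assms(2)[OF \<open>p0 \<in> U\<close>] by (auto simp: norm_vector_smult)
  moreover have "V p = cis (- s p) *s v" if "p \<in> U" for p
    using v[OF that] by (auto simp: vector_smult_assoc cis_mult)
  ultimately show ?thesis
    by blast
qed

theorem mainTheorem3:
  fixes U :: "(real^3) set"
    and e1 e2 e3 :: "real^3 \<Rightarrow> real^3"
    and E0 :: "real^3 \<Rightarrow> complex^4"
    and lam2 b1 theta :: "real^3 \<Rightarrow> real"
  defines "E1 \<equiv> vderiv e1 E0" and "E2 \<equiv> vderiv e2 E0" and "E3 \<equiv> vderiv e3 E0"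
  defines "V \<equiv> (\<lambda>p. (1 / sqrt (1 + (b1 p)\<^sup>2 + (lam2 p)\<^sup>2)) *\<^sub>R
                  ((- (complex_of_real (b1 p) + \<i> * complex_of_real (lam2 p))) *s E0 p + E1 p))"
  assumes U: "open U" "connected U"
    and reg: "E0 differentiable_on U" "E1 differentiable_on U" "E2 differentiable_on U"
             "E3 differentiable_on U" "lam2 differentiable_on U" "b1 differentiable_on U"
             "theta differentiable_on U"
    and sphere: "\<And>p. p \<in> U \<Longrightarrow> norm (E0 p) = 1"
    and horiz: "\<And>p. p \<in> U \<Longrightarrow>
         E1 p \<bullet> E0 p = 0 \<and> E2 p \<bullet> E0 p = 0 \<and> E3 p \<bullet> E0 p = 0 \<and>
         E1 p \<bullet> (\<i> *s E0 p) = 0 \<and> E2 p \<bullet> (\<i> *s E0 p) = 0 \<and> E3 p \<bullet> (\<i> *s E0 p) = 0"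
    and orthonormal: "\<And>p. p \<in> U \<Longrightarrow>
         E1 p \<bullet> E1 p = 1 \<and> E2 p \<bullet> E2 p = 1 \<and> E3 p \<bullet> E3 p = 1 \<and>
         E1 p \<bullet> E2 p = 0 \<and> E1 p \<bullet> E3 p = 0 \<and> E2 p \<bullet> E3 p = 0"
    and lagrangian: "\<And>p. p \<in> U \<Longrightarrow>
         E1 p \<bullet> (\<i> *s E2 p) = 0 \<and> E1 p \<bullet> (\<i> *s E3 p) = 0 \<and> E2 p \<bullet> (\<i> *s E3 p) = 0"
    and lam2_nz: "\<And>p. p \<in> U \<Longrightarrow> lam2 p \<noteq> 0"
    and DE1E1: "\<And>p. p \<in> U \<Longrightarrow>
         vderiv e1 E1 p = (\<i> * complex_of_real (4 * lam2 p)) *s E1 p - E0 p"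
    and DE2E1: "\<And>p. p \<in> U \<Longrightarrow>
         vderiv e2 E1 p = (complex_of_real (b1 p) + \<i> * complex_of_real (lam2 p)) *s E2 p"
    and DE3E1: "\<And>p. p \<in> U \<Longrightarrow>
         vderiv e3 E1 p = (complex_of_real (b1 p) + \<i> * complex_of_real (lam2 p)) *s E3 p"
    and lam2_eqs: "\<And>p. p \<in> U \<Longrightarrow>
         vderiv e2 lam2 p = 0 \<and> vderiv e3 lam2 p = 0 \<and> vderiv e1 lam2 p = 2 * lam2 p * b1 p"
    and b1_eqs: "\<And>p. p \<in> U \<Longrightarrow>
         vderiv e2 b1 p = 0 \<and> vderiv e3 b1 p = 0 \<and>
         vderiv e1 b1 p = - (1 + (b1 p)\<^sup>2 + 3 * (lam2 p)\<^sup>2)"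
    and theta_eqs: "\<And>p. p \<in> U \<Longrightarrow>
         vderiv e2 theta p = 0 \<and> vderiv e3 theta p = 0 \<and> vderiv e1 theta p = - lam2 p"
  shows "(\<forall>p\<in>U. vderiv e2 V p = 0 \<and> vderiv e3 V p = 0 \<and>
                 vderiv e1 V p = (\<i> * complex_of_real (3 * lam2 p)) *s V p)
       \<and> (\<exists>v::complex^4. norm v = 1 \<and>
            (\<forall>p\<in>U. \<exists>s::real. V p = cis s *s v) \<and>
            (\<exists>t::real^3 \<Rightarrow> real. t differentiable_on U \<and> (\<forall>p\<in>U. V p = cis (t p) *s v)) \<and>
            (\<forall>t::real^3 \<Rightarrow> real. t differentiable_on U \<and> (\<forall>p\<in>U. V p = cis (t p) *s v) \<longrightarrow>
                (\<forall>p\<in>U. vderiv e1 t p = 3 * lam2 p \<and> vderiv e2 t p = 0 \<and> vderiv e3 t p = 0) \<and>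
                (\<exists>c::real. \<forall>p\<in>U. theta p + c = - t p / 3)))"
proof -
  note diff = reg[unfolded differentiable_on_eq_differentiable_at[OF U(1)], rule_format]
  have V_eq: "V = v_field b1 lam2 E0 E1"
    by (simp add: V_def v_field_def fun_eq_iff vec_eq_iff Complex_eq algebra_simps)
  have DV: "vderiv e2 V p = 0 \<and> vderiv e3 V p = 0 \<and>
            vderiv e1 V p = (\<i> * complex_of_real (3 * lam2 p)) *s V p" if p: "p \<in> U" for p
    unfolding V_eq
    using diff(1,2,5,6)[OF p] DE1E1[OF p] DE2E1[OF p] DE3E1[OF p] lam2_eqs[OF p] b1_eqs[OF p]
    by (intro conjI vderiv_v_field_transverse vderiv_v_field_e1)
       (simp_all add: E1_def E2_def E3_def Complex_eq)
  have frame: "span ((\<lambda>X. X p) ` {e1, e2, e3}) = UNIV" if p: "p \<in> U" for p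
    using span_eq_UNIV_if_orthonormal_vderiv[OF _ diff(1)[OF p]] orthonormal[OF p]
    by (simp add: E1_def E2_def E3_def)
  have V_diff: "V differentiable_on U"
    unfolding V_eq differentiable_on_eq_differentiable_at[OF U(1)]
    using diff(6,5,1,2) by (blast intro: differentiable_v_field)
  have "(\<lambda>p. cis (3 * theta p) *s V p) constant_on U"
  proof (rule constant_on_cis_vector_smult[OF U _ V_diff frame])
    show "(\<lambda>p. 3 * theta p) differentiable_on U"
      using reg(7) by (auto intro!: derivative_intros)
    show "vderiv X V p = - (\<i> * of_real (vderiv X (\<lambda>p. 3 * theta p) p)) *s V p"
      if p: "p \<in> U" and "X \<in> {e1, e2, e3}" for p X
      using that DV[OF p] theta_eqs[OF p] vderiv_mult_left[OF diff(7)[OF p]]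
      by (auto simp: vec_eq_iff)
  qed
  moreover have "norm (V p) = 1" if "p \<in> U" for p
    unfolding V_eq using sphere[OF that] horiz[OF that] orthonormal[OF that]
    by (intro norm_v_field) (simp_all add: norm_eq_sqrt_inner)
  ultimately have "\<exists>v. norm v = 1 \<and> (\<forall>p\<in>U. V p = cis (- (3 * theta p)) *s v)"
    by (rule exists_unit_vector_if_cis_vector_smult_constant)
  then obtain v where v: "norm v = 1" and v_lift: "\<And>p. p \<in> U \<Longrightarrow> V p = cis (-3 * theta p) *s v"
    by auto
  have phase_diff: "(\<lambda>p. -3 * theta p) differentiable_on U"
    using reg(7) by (auto intro!: derivative_intros)
  have lift_props: "(\<forall>p\<in>U. vderiv e1 t p = 3 * lam2 p \<and> vderiv e2 t p = 0 \<and> vderiv e3 t p = 0)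
      \<and> (\<exists>c. \<forall>p\<in>U. theta p + c = - t p / 3)"
    if t: "t differentiable_on U" "\<forall>p\<in>U. V p = cis (t p) *s v" for t
  proof
    have cis_eq: "cis (t p) = cis (-3 * theta p)" if "p \<in> U" for p
      using t(2) v v_lift that by auto
    have "vderiv X t p = -3 * vderiv X theta p" if "p \<in> U" for X p
      using vderiv_eq_if_cis_eq[OF U t(1) phase_diff cis_eq that]
        vderiv_mult_left[OF diff(7)[OF that], of X "-3"]
      by (rule trans)
    then show "\<forall>p\<in>U. vderiv e1 t p = 3 * lam2 p \<and> vderiv e2 t p = 0 \<and> vderiv e3 t p = 0"
      using theta_eqs by simp
    obtain k where "\<And>p. p \<in> U \<Longrightarrow> t p = -3 * theta p + k"
      using cis_eq_imp_diff_constant[OF U(2) _ _ cis_eq] t(1) phase_diff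
      by (meson differentiable_imp_continuous_on)
    then show "\<exists>c. \<forall>p\<in>U. theta p + c = - t p / 3"
      by (intro exI[of _ "- k / 3"]) simp
  qed
  show ?thesis
    using DV v v_lift phase_diff lift_props by blast
qed

end
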